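(* Let $0<p<1/2$ and let $\Phi\colon\mathbb N_+\to[1,\infty)$ be a non-decreasing function with $\Phi(n)\to\infty$ and $$\limsup_{k\to\infty}\frac{2^{k(2-2p)}}{\Phi(2^k)}=\infty.$$ Then there exists a martingale $F\in H_p(G)$ such that $$\sum_{m=1}^{\infty}\frac{\Vert \sigma_m^\kappa F\Vert_{L_{p,\infty}}^p}{\Phi(m)}=\infty.$$
   Context: $G$ is the Walsh (dyadic) group: the set of sequences $x=(x_0,x_1,\dots)$ with $x_k\in\{0,1\}$, with coordinatewise addition mod 2 and normalized Haar measure $\mu$. $\mathcal F_n$ is the $\sigma$-algebra generated by the dyadic intervals $I_n(x)=\{y\in G: y_i=x_i \text{ for } i<n\}$. The Rademacher functions are $r_k(x)=(-1)^{x_k}$. For $n\in\mathbb N$ write $n=\sum_i n_i2^i$ with $n_i\in\{0,1\}$ and, for $n\ge1$, $|n|=\max\{j:n_j\neq0\}$. The Walsh–Kaczmarz functions are $\kappa_0=1$ and, for $n\geq1$, $\kappa_n(x)=r_{|n|}(x)(-1)^{\sum_{k=0}^{|n|-1}n_kx_{|n|-1-k}}$. A martingale $f=(f^{(n)})_{n}$ with respect to $(\mathcal F_n)$ belongs to the Hardy space $H_p(G)$ if $\Vert f\Vert_{H_p}:=\Vert \sup_n|f^{(n)}|\Vert_{L_p(G)}<\infty$. The Walsh–Kaczmarz–Fourier coefficients of a martingale are $\widehat f^\kappa(i)=\lim_{k\to\infty}\int_G f^{(k)}\kappa_i\,d\mu$; partial sums are $S_j^\kappa f=\sum_{k=0}^{j-1}\widehat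 f^\kappa(k)\kappa_k$, and Fejér means are $\sigma_n^\kappa f=\frac1n\sum_{j=1}^nS_j^\kappa f$. The weak $L_p$ quasi-norm is given by $\Vert g\Vert_{L_{p,\infty}}^p=\sup_{\lambda>0}\lambda^p\mu(\{x\in G:|g(x)|>\lambda\})$. *)

theory Defs
  imports "HOL-Probability.Probability"
begin

text \<open>The Walsh group: sequences x :: nat => bool (True stands for the digit 1),
  with the normalized Haar measure = infinite product of fair coin measures.\<close>

definition walsh_mu :: "(nat \<Rightarrow> bool) measure" where
  "walsh_mu = Pi\<^sub>M UNIV (\<lambda>_. measure_pmf (bernoulli_pmf (1/2)))"

definition dig :: "(nat \<Rightarrow> bool) \<Rightarrow> nat \<Rightarrow> nat" where
  "dig x k = (if x k then 1 else 0)"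

definition rad :: "nat \<Rightarrow> (nat \<Rightarrow> bool) \<Rightarrow> real" where
  "rad k x = (-1) ^ dig x k"

definition topbit :: "nat \<Rightarrow> nat" where
  "topbit n = (GREATEST j. bit n j)"

definition nbit :: "nat \<Rightarrow> nat \<Rightarrow> nat" where
  "nbit n k = (if bit n k then 1 else 0)"

definition kacz :: "nat \<Rightarrow> (nat \<Rightarrow> bool) \<Rightarrow> real" where
  "kacz n x = (if n = 0 then 1 else
     rad (topbit n) x * (-1) ^ (\<Sum>k<topbit n. nbit n k * dig x (topbit n - 1 - k)))"

text \<open>Dyadic martingales: f n is F_n measurable (depends only on x_0..x_{n-1})
  and the conditional expectation of f (n+1) w.r.t. F_n is f n.\<close>
definition dyadic_martingale :: "(nat \<Rightarrow> (nat \<Rightarrow> bool) \<Rightarrow> real) \<Rightarrow> bool" where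
  "dyadic_martingale f \<longleftrightarrow>
     (\<forall>n x y. (\<forall>i<n. x i = y i) \<longrightarrow> f n x = f n y) \<and>
     (\<forall>n x. f n x = (f (Suc n) (x(n := False)) + f (Suc n) (x(n := True))) / 2)"

definition in_Hp :: "real \<Rightarrow> (nat \<Rightarrow> (nat \<Rightarrow> bool) \<Rightarrow> real) \<Rightarrow> bool" where
  "in_Hp p f \<longleftrightarrow> dyadic_martingale f \<and>
     (\<integral>\<^sup>+ x. (SUP n. ennreal (\<bar>f n x\<bar> powr p)) \<partial>walsh_mu) < \<infinity>"

definition kacz_coeff :: "(nat \<Rightarrow> (nat \<Rightarrow> bool) \<Rightarrow> real) \<Rightarrow> nat \<Rightarrow> real" where
  "kacz_coeff f i = lim (\<lambda>k. \<integral>x. f k x * kacz i x \<partial>walsh_mu)"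

definition kacz_partial :: "(nat \<Rightarrow> (nat \<Rightarrow> bool) \<Rightarrow> real) \<Rightarrow> nat \<Rightarrow> (nat \<Rightarrow> bool) \<Rightarrow> real" where
  "kacz_partial f j x = (\<Sum>k<j. kacz_coeff f k * kacz k x)"

definition kacz_fejer :: "(nat \<Rightarrow> (nat \<Rightarrow> bool) \<Rightarrow> real) \<Rightarrow> nat \<Rightarrow> (nat \<Rightarrow> bool) \<Rightarrow> real" where
  "kacz_fejer f n x = (1 / real n) * (\<Sum>j=1..n. kacz_partial f j x)"

definition weak_Lp_pow :: "real \<Rightarrow> ((nat \<Rightarrow> bool) \<Rightarrow> real) \<Rightarrow> ennreal" where
  "weak_Lp_pow p g = (SUP t\<in>{0<..}. ennreal (t powr p) *
      emeasure walsh_mu {x \<in> space walsh_mu. \<bar>g x\<bar> > t})"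

end

theory Submission
  imports Defs
begin

text \<open>
  Fix a fast increasing sequence k_J, put \<beta>_J = 2 powr (k_J (1/p - 1) - J/p) and
  F = \<Sum>_J \<beta>_J 2^k_J r_k_J 1_I_k_J(0). Each summand is a multiple of a p-atom with
  (\<beta>_J 2^k_J)^p \<mu>(I_k_J(0)) = 2^-J, so the p-subadditivity of t \<mapsto> t^p puts F in H_p.
  The Walsh-Kaczmarz coefficient of F at i is \<beta>_J on the block 2^k_J \<le> i < 2^(k_J+1) and
  vanishes outside these blocks. For m = 2^k_J + M with M \<equiv> 1 mod 4 the block J contributes
  \<beta>_J \<Sum>_(r<M) (M - r) \<kappa>_(2^k_J+r)(x) to m \<sigma>_m F(x); since \<Sum>_(r<M) (M - r) = M(M+1)/2 is
  odd, this is an odd multiple of \<beta>_J, whereas the lower blocks contribute at most \<beta>_J/2 by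
  the growth of k_J. Hence |\<sigma>_m F| \<ge> \<beta>_J 2^-(k_J+2) everywhere, and the 2^(k_J-2) such m
  contribute at least 2^((k_J+1)(2-2p)) / (2^(J+5) \<Phi>(2^(k_J+1))) to the series, which
  exceeds J once k_J + 1 is taken along the limsup.
\<close>

abbreviation fair_coin :: "bool measure" where
  "fair_coin \<equiv> measure_pmf (bernoulli_pmf (1/2))"

lemma space_walsh_mu [simp]: "space walsh_mu = UNIV"
  by (simp add: walsh_mu_def space_PiM)

lemma prob_space_walsh_mu: "prob_space walsh_mu"
  unfolding walsh_mu_def by (intro prob_space_PiM prob_space_measure_pmf)

lemma measurable_walsh_digit: "(\<lambda>x. h (x t)) \<in> walsh_mu \<rightarrow>\<^sub>M count_space UNIV"
proof -
  have "(\<lambda>x. x t) \<in> walsh_mu \<rightarrow>\<^sub>M count_space UNIV"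
    using measurable_component_singleton[of t UNIV "\<lambda>_. fair_coin"] by (simp add: walsh_mu_def)
  then show ?thesis
    by (rule measurable_compose) (rule measurable_count_space)
qed

lemma borel_measurable_walsh_finite_dependence:
  fixes g :: "(nat \<Rightarrow> bool) \<Rightarrow> real"
  assumes "\<And>x y. (\<And>i. i < n \<Longrightarrow> x i = y i) \<Longrightarrow> g x = g y"
  shows "g \<in> borel_measurable walsh_mu"
  using assms
proof (induction n arbitrary: g)
  case 0
  then have "g = (\<lambda>x. g (\<lambda>_. False))" by auto
  then show ?case by (metis borel_measurable_const)
next
  case (Suc n)
  have g_eq: "g x = (if x n then g (x(n := True)) else g (x(n := False)))" for x
    by (cases "x n") (auto intro!: Suc.prems split: if_splits)
  have "(\<lambda>x. g (x(n := b))) \<in> borel_measurable walsh_mu" for b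
    by (rule Suc.IH) (auto intro!: Suc.prems)
  moreover have "Measurable.pred walsh_mu (\<lambda>x. x n)"
    using measurable_walsh_digit[of "\<lambda>b. b" n] by simp
  ultimately have "(\<lambda>x. if x n then g (x(n := True)) else g (x(n := False))) \<in> borel_measurable walsh_mu"
    by (intro measurable_If) (auto simp: pred_def)
  then show ?case using g_eq by simp
qed

lemma prod_emb_fair_coin: "prod_emb UNIV (\<lambda>_. fair_coin) J (Pi\<^sub>E J A) = {x. \<forall>j\<in>J. x j \<in> A j}"
  by (auto simp: prod_emb_def space_PiM PiE_def Pi_def extensional_def)

lemma map_pmf_Not_fair_coin: "map_pmf Not (bernoulli_pmf (1/2)) = bernoulli_pmf (1/2)"
proof (rule pmf_eqI)
  fix b
  have "pmf (map_pmf Not (bernoulli_pmf (1/2))) (\<not> \<not> b) = pmf (bernoulli_pmf (1/2)) (\<not> b)"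
    by (rule pmf_map_inj') (simp add: inj_def)
  then show "pmf (map_pmf Not (bernoulli_pmf (1/2))) b = pmf (bernoulli_pmf (1/2)) b"
    by (cases b) simp_all
qed

definition walsh_flip :: "nat \<Rightarrow> (nat \<Rightarrow> bool) \<Rightarrow> nat \<Rightarrow> bool" where
  "walsh_flip t x = x(t := \<not> x t)"

lemma measurable_walsh_flip: "walsh_flip t \<in> walsh_mu \<rightarrow>\<^sub>M walsh_mu"
proof -
  have "(\<lambda>x. walsh_flip t x i) \<in> walsh_mu \<rightarrow>\<^sub>M fair_coin" for i
    using measurable_walsh_digit[of Not t] measurable_walsh_digit[of "\<lambda>b. b" i]
    by (cases "i = t") (simp_all add: walsh_flip_def)
  then show ?thesis
    unfolding walsh_mu_def by (intro measurable_PiM_single') (auto simp: walsh_mu_def space_PiM)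
qed

lemma distr_walsh_flip: "distr walsh_mu walsh_mu (walsh_flip t) = walsh_mu"
proof (rule measure_eqI_PiM_infinite[where I=UNIV and M="\<lambda>_. fair_coin"])
  show "sets (distr walsh_mu walsh_mu (walsh_flip t)) = sets (Pi\<^sub>M UNIV (\<lambda>_. fair_coin))"
    "sets walsh_mu = sets (Pi\<^sub>M UNIV (\<lambda>_. fair_coin))"
    by (simp_all add: walsh_mu_def)
  show "finite_measure (distr walsh_mu walsh_mu (walsh_flip t))"
    using prob_space_walsh_mu measurable_walsh_flip
    by (intro prob_space.finite_measure prob_space.prob_space_distr) auto
next
  fix A J assume J: "finite (J :: nat set)" "J \<subseteq> UNIV"
  define A' where "A' i = (if i = t then Not -` A i else A i)" for i
  let ?emb = "prod_emb UNIV (\<lambda>_. fair_coin) J"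
  have "?emb (Pi\<^sub>E J A) \<in> sets walsh_mu"
    unfolding walsh_mu_def using J by (intro sets_PiM_I) auto
  moreover have "walsh_flip t -` ?emb (Pi\<^sub>E J A) = ?emb (Pi\<^sub>E J A')"
    unfolding prod_emb_fair_coin by (auto simp: walsh_flip_def A'_def)
  ultimately have "emeasure (distr walsh_mu walsh_mu (walsh_flip t)) (?emb (Pi\<^sub>E J A))
      = emeasure walsh_mu (?emb (Pi\<^sub>E J A'))"
    using measurable_walsh_flip by (simp add: emeasure_distr)
  also have "\<dots> = (\<Prod>i\<in>J. emeasure fair_coin (A' i))"
    unfolding walsh_mu_def using J by (intro emeasure_PiM_emb prob_space_measure_pmf) auto
  also have "\<dots> = (\<Prod>i\<in>J. emeasure fair_coin (A i))"
    by (intro prod.cong) (auto simp: A'_def map_pmf_Not_fair_coin simp flip: emeasure_map_pmf)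
  also have "\<dots> = emeasure walsh_mu (?emb (Pi\<^sub>E J A))"
    unfolding walsh_mu_def using J by (intro emeasure_PiM_emb[symmetric] prob_space_measure_pmf) auto
  finally show "emeasure (distr walsh_mu walsh_mu (walsh_flip t)) (?emb (Pi\<^sub>E J A))
      = emeasure walsh_mu (?emb (Pi\<^sub>E J A))" .
qed

lemma integral_walsh_flip:
  fixes g :: "(nat \<Rightarrow> bool) \<Rightarrow> real"
  assumes "g \<in> borel_measurable walsh_mu"
  shows "(\<integral>x. g (walsh_flip t x) \<partial>walsh_mu) = (\<integral>x. g x \<partial>walsh_mu)"
  using integral_distr[OF measurable_walsh_flip assms, of t] by (simp add: distr_walsh_flip)

lemma integral_walsh_odd_eq_0:
  fixes g :: "(nat \<Rightarrow> bool) \<Rightarrow> real"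
  assumes "g \<in> borel_measurable walsh_mu" "\<And>x. g (walsh_flip t x) = - g x"
  shows "(\<integral>x. g x \<partial>walsh_mu) = 0"
  using integral_walsh_flip[OF assms(1), of t] assms(2) by simp

definition dyadic_cylinder :: "nat \<Rightarrow> (nat \<Rightarrow> bool) set" where
  "dyadic_cylinder k = {x. \<forall>i<k. \<not> x i}"

lemma dyadic_cylinder_eq_prod_emb:
  "dyadic_cylinder k = prod_emb UNIV (\<lambda>_. fair_coin) {..<k} (Pi\<^sub>E {..<k} (\<lambda>_. {False}))"
  unfolding prod_emb_fair_coin dyadic_cylinder_def by auto

lemma sets_dyadic_cylinder [measurable]: "dyadic_cylinder k \<in> sets walsh_mu"
  unfolding dyadic_cylinder_eq_prod_emb walsh_mu_def by (intro sets_PiM_I) auto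

lemma emeasure_dyadic_cylinder: "emeasure walsh_mu (dyadic_cylinder k) = ennreal ((1/2)^k)"
proof -
  have "emeasure walsh_mu (dyadic_cylinder k) = (\<Prod>i<k. emeasure fair_coin {False})"
    unfolding dyadic_cylinder_eq_prod_emb walsh_mu_def
    by (intro emeasure_PiM_emb prob_space_measure_pmf) auto
  also have "\<dots> = (\<Prod>i<k. ennreal (1/2))"
    by (simp add: emeasure_pmf_single)
  also have "\<dots> = ennreal ((1/2)^k)"
    by (subst prod_ennreal) simp_all
  finally show ?thesis .
qed

lemma measure_dyadic_cylinder: "measure walsh_mu (dyadic_cylinder k) = (1/2)^k"
  by (simp add: measure_def emeasure_dyadic_cylinder)

lemma topbit_eqI:
  assumes "2^k \<le> n" "n < 2^Suc k"
  shows "topbit n = k"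
  unfolding topbit_def
proof (rule Greatest_equality)
  have "n div 2^k = 1"
    using assms by (intro div_nat_eqI) auto
  then show "bit n k" by (simp add: bit_iff_odd)
next
  fix j assume "bit n j"
  show "j \<le> k"
  proof (rule ccontr)
    assume "\<not> j \<le> k"
    then have "2^Suc k \<le> (2::nat)^j" by (intro power_increasing) auto
    then have "n div 2^j = 0" using assms by auto
    then show False using \<open>bit n j\<close> by (simp add: bit_iff_odd)
  qed
qed

lemma topbit_bounds:
  assumes "1 \<le> n"
  shows "2^topbit n \<le> n" "n < 2^Suc (topbit n)"
proof -
  obtain k where "2^k \<le> n" "n < 2^(k + 1)"
    using ex_power_ivl1[of 2 n] assms by auto
  then show "2^topbit n \<le> n" "n < 2^Suc (topbit n)"
    using topbit_eqI[of k n] by auto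
qed

lemma topbit_power_add: "r < 2^k \<Longrightarrow> topbit (2^k + r) = k"
  by (intro topbit_eqI) auto

lemma kacz_eq_1_or_minus_1: "kacz n x = 1 \<or> kacz n x = -1"
  unfolding kacz_def rad_def by (auto simp: minus_one_power_iff)

lemma abs_kacz [simp]: "\<bar>kacz n x\<bar> = 1"
  using kacz_eq_1_or_minus_1[of n x] by auto

lemma kacz_cong:
  assumes "\<And>i. i \<le> topbit n \<Longrightarrow> x i = y i"
  shows "kacz n x = kacz n y"
proof -
  have "dig x (topbit n - 1 - k) = dig y (topbit n - 1 - k)" for k
    using assms[of "topbit n - 1 - k"] by (simp add: dig_def)
  moreover have "rad (topbit n) x = rad (topbit n) y"
    using assms[of "topbit n"] by (simp add: rad_def dig_def)
  ultimately show ?thesis unfolding kacz_def by simp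
qed

lemma borel_measurable_kacz: "kacz n \<in> borel_measurable walsh_mu"
  by (rule borel_measurable_walsh_finite_dependence[of "Suc (topbit n)"]) (auto intro!: kacz_cong)

lemma kacz_walsh_flip_topbit:
  assumes "1 \<le> n"
  shows "kacz n (walsh_flip (topbit n) x) = - kacz n x"
proof -
  have "dig (walsh_flip (topbit n) x) (topbit n - 1 - k) = dig x (topbit n - 1 - k)"
    if "k < topbit n" for k
  proof -
    have "topbit n - 1 - k \<noteq> topbit n" using that by linarith
    then show ?thesis by (simp add: dig_def walsh_flip_def)
  qed
  moreover have "rad (topbit n) (walsh_flip (topbit n) x) = - rad (topbit n) x"
    by (simp add: rad_def dig_def walsh_flip_def)
  ultimately show ?thesis unfolding kacz_def using assms by simp
qed

lemma kacz_walsh_flip_above: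
  assumes "n = 0 \<or> topbit n < t"
  shows "kacz n (walsh_flip t x) = kacz n x"
proof (cases "n = 0")
  case False
  then show ?thesis using assms by (intro kacz_cong) (auto simp: walsh_flip_def)
qed (simp add: kacz_def)

lemma kacz_on_dyadic_cylinder:
  assumes "1 \<le> n" "x \<in> dyadic_cylinder (topbit n)"
  shows "kacz n x = rad (topbit n) x"
proof -
  have "dig x (topbit n - 1 - k) = 0" if "k < topbit n" for k
    using assms(2) that by (simp add: dyadic_cylinder_def dig_def)
  then show ?thesis unfolding kacz_def using assms(1) by simp
qed

text \<open>Multiplied by 2 powr (k/p), this is a p-atom supported on I_k(0).\<close>

definition walsh_atom :: "nat \<Rightarrow> (nat \<Rightarrow> bool) \<Rightarrow> real" where
  "walsh_atom k x = indicator (dyadic_cylinder k) x * rad k x"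

lemma walsh_atom_cong: "(\<And>i. i \<le> k \<Longrightarrow> x i = y i) \<Longrightarrow> walsh_atom k x = walsh_atom k y"
  by (auto simp: walsh_atom_def dyadic_cylinder_def indicator_def rad_def dig_def)

lemma borel_measurable_walsh_atom: "walsh_atom k \<in> borel_measurable walsh_mu"
  by (rule borel_measurable_walsh_finite_dependence[of "Suc k"]) (auto intro!: walsh_atom_cong)

lemma abs_walsh_atom: "\<bar>walsh_atom k x\<bar> = indicator (dyadic_cylinder k) x"
  by (simp add: walsh_atom_def rad_def abs_mult)

lemma walsh_atom_walsh_flip: "walsh_atom k (walsh_flip k x) = - walsh_atom k x"
  by (simp add: walsh_atom_def walsh_flip_def dyadic_cylinder_def rad_def dig_def indicator_def)

lemma walsh_atom_walsh_flip_above: "k < t \<Longrightarrow> walsh_atom k (walsh_flip t x) = walsh_atom k x"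
  by (auto simp: walsh_flip_def intro!: walsh_atom_cong)

lemma walsh_atom_update_sum: "walsh_atom k (x(k := False)) + walsh_atom k (x(k := True)) = 0"
  by (simp add: walsh_atom_def dyadic_cylinder_def rad_def dig_def indicator_def)

lemma integrable_walsh_atom_kacz: "integrable walsh_mu (\<lambda>x. walsh_atom k x * kacz n x)"
proof -
  have "finite_measure walsh_mu"
    using prob_space_walsh_mu by (rule prob_space.finite_measure)
  moreover have "norm (walsh_atom k x * kacz n x) \<le> 1" for x
    by (simp add: abs_mult abs_walsh_atom indicator_def)
  ultimately show ?thesis
    using borel_measurable_walsh_atom borel_measurable_kacz
    by (intro finite_measure.integrable_const_bound[where B=1]) auto
qed

lemma integral_walsh_atom_kacz:
  "(\<integral>x. walsh_atom k x * kacz n x \<partial>walsh_mu) = (if 1 \<le> n \<and> topbit n = k then (1/2)^k else 0)"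
proof -
  have meas: "(\<lambda>x. walsh_atom k x * kacz n x) \<in> borel_measurable walsh_mu"
    using borel_measurable_walsh_atom borel_measurable_kacz by (rule borel_measurable_times)
  consider "1 \<le> n" "topbit n = k" | "n = 0 \<or> topbit n < k" | "1 \<le> n" "k < topbit n"
    by linarith
  then show ?thesis
  proof cases
    case 1
    have "walsh_atom k x * kacz n x = indicator (dyadic_cylinder k) x" for x
      using 1 kacz_on_dyadic_cylinder[of n x]
      by (auto simp: walsh_atom_def indicator_def rad_def)
    then show ?thesis using 1 by (simp add: measure_dyadic_cylinder)
  next
    case 2
    then have "(\<integral>x. walsh_atom k x * kacz n x \<partial>walsh_mu) = 0"
      by (intro integral_walsh_odd_eq_0[OF meas, where t=k])
        (simp add: walsh_atom_walsh_flip kacz_walsh_flip_above)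
    then show ?thesis using 2 by auto
  next
    case 3
    then have "(\<integral>x. walsh_atom k x * kacz n x \<partial>walsh_mu) = 0"
      by (intro integral_walsh_odd_eq_0[OF meas, where t="topbit n"])
        (simp add: walsh_atom_walsh_flip_above kacz_walsh_flip_topbit)
    then show ?thesis using 3 by auto
  qed
qed

lemma powr_add_le_add_powr:
  fixes a b p :: real
  assumes "0 \<le> a" "0 \<le> b" "0 < p" "p \<le> 1"
  shows "(a + b) powr p \<le> a powr p + b powr p"
proof (cases "a + b = 0")
  case False
  have le: "c * (a + b) powr (p - 1) \<le> c powr p" if "0 \<le> c" "c \<le> a + b" for c
  proof (cases "c = 0")
    case False
    then have "c * (a + b) powr (p - 1) \<le> c * c powr (p - 1)"
      using that assms by (intro mult_left_mono powr_mono2') auto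
    also have "\<dots> = c powr p"
      using that False by (simp add: powr_diff)
    finally show ?thesis .
  qed simp
  have "(a + b) powr p = (a + b) * (a + b) powr (p - 1)"
    using False assms by (simp add: powr_diff)
  also have "\<dots> = a * (a + b) powr (p - 1) + b * (a + b) powr (p - 1)"
    by (simp add: distrib_right)
  finally show ?thesis
    using le[of a] le[of b] assms by simp
qed (use assms in simp)

lemma abs_sum_powr_le:
  fixes f :: "nat \<Rightarrow> real"
  assumes "0 < p" "p \<le> 1"
  shows "\<bar>\<Sum>j<n. f j\<bar> powr p \<le> (\<Sum>j<n. \<bar>f j\<bar> powr p)"
proof (induction n)
  case (Suc n)
  have "\<bar>\<Sum>j<Suc n. f j\<bar> powr p \<le> (\<bar>\<Sum>j<n. f j\<bar> + \<bar>f n\<bar>) powr p"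
    using assms by (intro powr_mono2) (auto simp: abs_triangle_ineq)
  also have "\<dots> \<le> \<bar>\<Sum>j<n. f j\<bar> powr p + \<bar>f n\<bar> powr p"
    using assms by (intro powr_add_le_add_powr) auto
  finally show ?case using Suc by simp
qed (use assms in simp)

lemma sum_partial_sums:
  fixes a :: "nat \<Rightarrow> 'a :: comm_semiring_1"
  shows "(\<Sum>j=1..m. \<Sum>k<j. a k) = (\<Sum>k<m. of_nat (m - k) * a k)"
proof (induction m)
  case (Suc m)
  have "(\<Sum>k<Suc m. of_nat (Suc m - k) * a k) = (\<Sum>k<Suc m. of_nat (m - k) * a k + a k)"
    by (intro sum.cong) (auto simp: Suc_diff_le algebra_simps)
  then show ?case using Suc by (simp add: sum.distrib)
qed simp

lemma kacz_fejer_eq_weighted_sum: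
  "kacz_fejer f m x = (\<Sum>k<m. real (m - k) * (kacz_coeff f k * kacz k x)) / real m"
  unfolding kacz_fejer_def kacz_partial_def sum_partial_sums by simp

lemma double_sum_diff_lessThan: "2 * (\<Sum>r<N. int (N - r)) = int N * (int N + 1)"
proof (induction N)
  case (Suc N)
  have "(\<Sum>r<N. int (Suc N - r)) = (\<Sum>r<N. int (N - r) + 1)"
    by (intro sum.cong) auto
  then have "(\<Sum>r<Suc N. int (Suc N - r)) = (\<Sum>r<N. int (N - r)) + int N + 1"
    by (simp add: sum.distrib)
  then show ?case using Suc by (simp add: algebra_simps)
qed simp

lemma one_le_abs_weighted_sign_sum:
  fixes e :: "nat \<Rightarrow> real"
  assumes "M mod 4 = 1" and e: "\<And>r. e r = 1 \<or> e r = -1"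
  shows "1 \<le> \<bar>\<Sum>r<M. real (M - r) * e r\<bar>"
proof -
  define \<epsilon> :: "nat \<Rightarrow> int" where "\<epsilon> r = (if e r = 1 then 1 else -1)" for r
  define s where "s = (\<Sum>r<M. int (M - r) * \<epsilon> r)"
  have "e r = of_int (\<epsilon> r)" for r
    using e[of r] by (auto simp: \<epsilon>_def)
  then have sum_eq: "(\<Sum>r<M. real (M - r) * e r) = of_int s"
    by (simp add: s_def)
  obtain q where "M = 4 * q + 1"
    using assms(1) by (metis div_mult_mod_eq mult.commute)
  then have "2 * (\<Sum>r<M. int (M - r)) = 2 * (int M * (2 * int q + 1))"
    using double_sum_diff_lessThan[of M] by (simp add: algebra_simps)
  then have "(\<Sum>r<M. int (M - r)) = int M * (2 * int q + 1)"
    by simp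
  then have odd_sum: "odd (\<Sum>r<M. int (M - r))"
    using \<open>M = 4 * q + 1\<close> by simp
  have "s - (\<Sum>r<M. int (M - r)) = (\<Sum>r<M. int (M - r) * (\<epsilon> r - 1))"
    by (simp add: s_def sum_subtractf[symmetric] algebra_simps)
  moreover have "even (\<Sum>r<M. int (M - r) * (\<epsilon> r - 1))"
    by (intro dvd_sum) (auto simp: \<epsilon>_def)
  ultimately have "odd s"
    using odd_sum by (metis even_add diff_add_cancel)
  then have "1 \<le> \<bar>s\<bar>" by presburger
  then show ?thesis
    unfolding sum_eq by (simp flip: of_int_abs)
qed

lemma weak_Lp_pow_ge:
  assumes "0 < t" "\<And>x. t < \<bar>g x\<bar>"
  shows "ennreal (t powr p) \<le> weak_Lp_pow p g"
proof -
  have "{x \<in> space walsh_mu. t < \<bar>g x\<bar>} = space walsh_mu"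
    using assms(2) by auto
  then have "ennreal (t powr p) = ennreal (t powr p) * emeasure walsh_mu {x \<in> space walsh_mu. t < \<bar>g x\<bar>}"
    using prob_space.emeasure_space_1[OF prob_space_walsh_mu] by simp
  also have "\<dots> \<le> weak_Lp_pow p g"
    unfolding weak_Lp_pow_def using assms(1) by (intro SUP_upper) auto
  finally show ?thesis .
qed

definition atom_weight :: "real \<Rightarrow> nat \<Rightarrow> nat \<Rightarrow> real" where
  "atom_weight p J k = 2 powr (real k * (1/p - 1) - real J / p)"

lemma atom_weight_pos [simp]: "0 < atom_weight p J k"
  by (simp add: atom_weight_def)

lemma atom_weight_times_power_powr:
  assumes "0 < p"
  shows "(atom_weight p J k * 2^k) powr p = 2 powr (real k - real J)"
proof -
  have "atom_weight p J k * 2^k = 2 powr (real k * (1/p - 1) - real J / p) * 2 powr real k"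
    by (simp add: atom_weight_def powr_realpow)
  also have "\<dots> = 2 powr ((real k - real J) / p)"
    by (simp add: algebra_simps diff_divide_distrib flip: powr_add)
  finally show ?thesis
    using assms by (simp add: powr_powr)
qed

lemma eventually_atom_weight_dominates:
  assumes "0 < p" "p < 1/2"
  shows "\<forall>\<^sub>F k in sequentially. 2^(k + 1) * C \<le> atom_weight p J k / 2"
proof -
  define b where "b = 2 powr (1/p - 2)"
  define D where "D = 2 powr (- real J / p - 2)"
  have "1 < b"
    using assms by (simp add: b_def field_simps)
  then have "\<forall>\<^sub>F k in sequentially. C / D \<le> b^k"
    using filterlim_realpow_sequentially_gt1[of b] by (auto simp: filterlim_at_infinity_imp_norm_at_top
        filterlim_at_top dest!: filterlim_at_infinity_imp_norm_at_top)
  then show ?thesis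
  proof (rule eventually_mono)
    fix k assume "C / D \<le> b^k"
    then have "2^(k + 1) * C \<le> 2^(k + 1) * (b^k * D)"
      by (simp add: D_def field_simps)
      also have "\<dots> = 2 powr (real k + 1) * (2 powr (real k * (1/p - 2)) * 2 powr (- real J / p - 2))"
      by (simp add: b_def D_def powr_power powr_add powr_realpow)
    also have "\<dots> = 2 powr (real k + 1 + real k * (1/p - 2) + (- real J / p - 2))"
      by (simp only: powr_add mult.assoc)
    also have "real k + 1 + real k * (1/p - 2) + (- real J / p - 2) = (real k * (1/p - 1) - real J / p) - 1"
      by (simp add: algebra_simps)
    also have "2 powr \<dots> = atom_weight p J k / 2"
      by (simp add: atom_weight_def powr_diff)
    finally show "2^(k + 1) * C \<le> atom_weight p J k / 2" .
  qed
qed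

lemma frequently_less_of_limsup_eq_infinity:
  fixes R :: "nat \<Rightarrow> ereal"
  assumes "limsup R = \<infinity>"
  shows "\<exists>\<^sub>F k in sequentially. ereal B < R (Suc k)"
proof (rule ccontr)
  assume "\<not> ?thesis"
  then have "\<forall>\<^sub>F k in sequentially. R (Suc k) \<le> ereal B"
    by (simp add: not_frequently not_less)
  then have "\<forall>\<^sub>F k in sequentially. R k \<le> ereal B"
    by (rule eventually_sequentially_Suc[of "\<lambda>k. R k \<le> ereal B", THEN iffD1])
  then have "limsup R \<le> ereal B" by (rule Limsup_bounded)
  with assms show False by simp
qed

lemma ennreal_eq_top_if_nat_le:
  assumes "\<And>J::nat. ennreal (real J) \<le> x"
  shows "x = \<infinity>"
proof -
  have "(SUP J. of_nat J :: ennreal) \<le> x"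
    using assms by (intro SUP_least) (simp add: ennreal_of_nat_eq_real_of_nat)
  then show ?thesis by (simp add: ennreal_SUP_of_nat_eq_top top_unique)
qed

locale kaczmarz_counterexample =
  fixes p :: real and ks :: "nat \<Rightarrow> nat"
  assumes p_pos: "0 < p" and p_le_1: "p \<le> 1"
    and strict_mono_ks: "strict_mono ks"
    and ks_ge_2: "2 \<le> ks J"
    and ks_growth: "2^(ks (Suc J) + 1) * (2^(ks J + 1) * atom_weight p J (ks J))
      \<le> atom_weight p (Suc J) (ks (Suc J)) / 2"
begin

abbreviation \<beta> :: "nat \<Rightarrow> real" where
  "\<beta> J \<equiv> atom_weight p J (ks J)"

lemma le_ks: "j \<le> ks j"
  using strict_mono_ks by (rule seq_suble)

lemma ks_less_iff [simp]: "ks i < ks j \<longleftrightarrow> i < j"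
  using strict_mono_ks by (simp add: strict_mono_less)

lemma ks_eq_iff [simp]: "ks i = ks j \<longleftrightarrow> i = j"
  using strict_mono_ks by (simp add: strict_mono_eq)

lemma \<beta>_mono: "I \<le> J \<Longrightarrow> \<beta> I \<le> \<beta> J"
proof (induction J rule: dec_induct)
  case (step J)
  have "(1::real) \<le> 2^(ks (Suc J) + 1) * 2^(ks J + 1)"
    using one_le_power[of "2::real" "ks (Suc J) + 1 + (ks J + 1)"] by (simp add: power_add)
  then have "1 * \<beta> J \<le> (2^(ks (Suc J) + 1) * 2^(ks J + 1)) * \<beta> J"
    by (intro mult_right_mono) (simp_all add: less_imp_le)
  then have "\<beta> J \<le> 2^(ks (Suc J) + 1) * (2^(ks J + 1) * \<beta> J)"
    by (simp add: mult.assoc)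
  also have "\<dots> \<le> \<beta> (Suc J) / 2" by (rule ks_growth)
  finally show ?case using step.IH atom_weight_pos[of p J "ks J"] by linarith
qed simp

text \<open>The bound \<open>j < n\<close> only makes the sum finite, as \<open>ks j < n\<close> implies it.\<close>

definition F :: "nat \<Rightarrow> (nat \<Rightarrow> bool) \<Rightarrow> real" where
  "F n x = (\<Sum>j<n. if ks j < n then \<beta> j * 2^ks j * walsh_atom (ks j) x else 0)"

lemma F_cong: "(\<And>i. i < n \<Longrightarrow> x i = y i) \<Longrightarrow> F n x = F n y"
  unfolding F_def by (intro sum.cong refl) (auto intro!: walsh_atom_cong)

lemma F_Suc:
  "F (Suc n) x = F n x + (\<Sum>j<Suc n. if ks j = n then \<beta> j * 2^n * walsh_atom n x else 0)"
proof -
  have "F (Suc n) x = (\<Sum>j<Suc n. if ks j < n then \<beta> j * 2^ks j * walsh_atom (ks j) x else 0)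
      + (\<Sum>j<Suc n. if ks j = n then \<beta> j * 2^n * walsh_atom n x else 0)"
    unfolding F_def sum.distrib[symmetric] by (intro sum.cong) auto
  also have "(\<Sum>j<Suc n. if ks j < n then \<beta> j * 2^ks j * walsh_atom (ks j) x else 0) = F n x"
    using le_ks[of n] by (simp add: F_def)
  finally show ?thesis .
qed

lemma dyadic_martingale_F: "dyadic_martingale F"
  unfolding dyadic_martingale_def
proof (intro conjI allI impI)
  fix n and x y :: "nat \<Rightarrow> bool"
  assume "\<forall>i<n. x i = y i"
  then show "F n x = F n y" by (intro F_cong) auto
next
  fix n and x :: "nat \<Rightarrow> bool"
  have "F n (x(n := b)) = F n x" for b by (rule F_cong) auto
  moreover have "(\<Sum>j<Suc n. if ks j = n then \<beta> j * 2^n * walsh_atom n (x(n := False)) else 0)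
      + (\<Sum>j<Suc n. if ks j = n then \<beta> j * 2^n * walsh_atom n (x(n := True)) else 0) = 0"
    unfolding sum.distrib[symmetric]
    by (intro sum.neutral) (auto simp: walsh_atom_update_sum simp flip: distrib_left)
  ultimately show "F n x = (F (Suc n) (x(n := False)) + F (Suc n) (x(n := True))) / 2"
    by (simp add: F_Suc)
qed

lemma abs_F_powr_le:
  "ennreal (\<bar>F n x\<bar> powr p)
    \<le> (\<Sum>j. ennreal (2 powr (real (ks j) - real j)) * indicator (dyadic_cylinder (ks j)) x)"
proof -
  have term_eq: "ennreal (\<bar>\<beta> j * 2^ks j * walsh_atom (ks j) x\<bar> powr p)
      = ennreal (2 powr (real (ks j) - real j)) * indicator (dyadic_cylinder (ks j)) x" for j
    using p_pos atom_weight_times_power_powr[OF p_pos, of j "ks j"]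
    by (cases "x \<in> dyadic_cylinder (ks j)") (simp_all add: abs_mult abs_walsh_atom abs_of_pos)
  have "\<bar>F n x\<bar> powr p \<le> (\<Sum>j<n. \<bar>if ks j < n then \<beta> j * 2^ks j * walsh_atom (ks j) x else 0\<bar> powr p)"
    unfolding F_def using p_pos p_le_1 by (rule abs_sum_powr_le)
  also have "\<dots> \<le> (\<Sum>j<n. \<bar>\<beta> j * 2^ks j * walsh_atom (ks j) x\<bar> powr p)"
    by (intro sum_mono) auto
  finally have "ennreal (\<bar>F n x\<bar> powr p) \<le> ennreal (\<Sum>j<n. \<bar>\<beta> j * 2^ks j * walsh_atom (ks j) x\<bar> powr p)"
    by (rule ennreal_leI)
  also have "\<dots> = (\<Sum>j<n. ennreal (2 powr (real (ks j) - real j)) * indicator (dyadic_cylinder (ks j)) x)"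
    by (simp add: term_eq flip: sum_ennreal)
  also have "\<dots> \<le> (\<Sum>j. ennreal (2 powr (real (ks j) - real j)) * indicator (dyadic_cylinder (ks j)) x)"
    by (rule sum_le_suminf) auto
  finally show ?thesis .
qed

lemma in_Hp_F: "in_Hp p F"
  unfolding in_Hp_def
proof (intro conjI dyadic_martingale_F)
  have weight: "ennreal (2 powr (real (ks j) - real j)) * ennreal ((1/2)^ks j) = ennreal ((1/2)^j)" for j
    by (simp add: powr_diff powr_realpow field_simps flip: ennreal_mult)
  have "(\<integral>\<^sup>+ x. (SUP n. ennreal (\<bar>F n x\<bar> powr p)) \<partial>walsh_mu)
      \<le> (\<integral>\<^sup>+ x. (\<Sum>j. ennreal (2 powr (real (ks j) - real j)) * indicator (dyadic_cylinder (ks j)) x) \<partial>walsh_mu)"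
    by (intro nn_integral_mono SUP_least abs_F_powr_le)
  also have "\<dots> = (\<Sum>j. ennreal (2 powr (real (ks j) - real j)) * emeasure walsh_mu (dyadic_cylinder (ks j)))"
    by (simp add: nn_integral_suminf nn_integral_cmult_indicator)
  also have "\<dots> = ennreal (\<Sum>j. (1/2)^j)"
    by (simp add: emeasure_dyadic_cylinder weight suminf_ennreal2)
  also have "\<dots> < \<infinity>" by simp
  finally show "(\<integral>\<^sup>+ x. (SUP n. ennreal (\<bar>F n x\<bar> powr p)) \<partial>walsh_mu) < \<infinity>" .
qed

lemma integral_F_kacz:
  "(\<integral>x. F n x * kacz i x \<partial>walsh_mu) = (\<Sum>j<n. if ks j < n \<and> 1 \<le> i \<and> topbit i = ks j then \<beta> j else 0)"
proof -
  define c where "c j = (if ks j < n then \<beta> j * 2^ks j else 0)" for j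
  have "(\<integral>x. F n x * kacz i x \<partial>walsh_mu)
      = (\<integral>x. (\<Sum>j<n. c j * (walsh_atom (ks j) x * kacz i x)) \<partial>walsh_mu)"
    unfolding F_def sum_distrib_right c_def by (intro Bochner_Integration.integral_cong sum.cong) auto
  also have "\<dots> = (\<Sum>j<n. c j * (\<integral>x. walsh_atom (ks j) x * kacz i x \<partial>walsh_mu))"
    by (subst Bochner_Integration.integral_sum) (auto simp: integrable_walsh_atom_kacz)
  also have "\<dots> = (\<Sum>j<n. if ks j < n \<and> 1 \<le> i \<and> topbit i = ks j then \<beta> j else 0)"
    by (intro sum.cong) (auto simp: c_def integral_walsh_atom_kacz power_one_over)
  finally show ?thesis .
qed

lemma kacz_coeff_F_block:
  assumes "1 \<le> i" "topbit i = ks J"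
  shows "kacz_coeff F i = \<beta> J"
proof -
  have "(\<integral>x. F n x * kacz i x \<partial>walsh_mu) = \<beta> J" if "ks J < n" for n
  proof -
    have "(\<Sum>j<n. if ks j < n \<and> 1 \<le> i \<and> topbit i = ks j then \<beta> j else 0)
        = (\<Sum>j<n. if j = J then \<beta> J else 0)"
      using assms that by (intro sum.cong) auto
    then show ?thesis
      using that le_ks[of J] by (simp add: integral_F_kacz)
  qed
  then have "(\<lambda>n. \<integral>x. F n x * kacz i x \<partial>walsh_mu) \<longlonglongrightarrow> \<beta> J"
    by (intro tendsto_eventually) (auto simp: eventually_sequentially intro!: exI[of _ "Suc (ks J)"])
  then show ?thesis unfolding kacz_coeff_def by (rule limI)
qed

lemma kacz_coeff_F_eq_0:
  assumes "i = 0 \<or> topbit i \<notin> range ks"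
  shows "kacz_coeff F i = 0"
proof -
  have "(\<lambda>n. \<integral>x. F n x * kacz i x \<partial>walsh_mu) = (\<lambda>n. 0)"
    using assms by (auto simp: integral_F_kacz intro!: ext sum.neutral)
  then show ?thesis by (simp add: kacz_coeff_def limI)
qed

lemma abs_kacz_coeff_F_le:
  assumes "i < 2^ks (Suc J)"
  shows "\<bar>kacz_coeff F i\<bar> \<le> (if i < 2^(ks J + 1) then \<beta> J else 0)"
proof (cases "i = 0 \<or> topbit i \<notin> range ks")
  case True
  then show ?thesis by (simp add: kacz_coeff_F_eq_0 less_imp_le)
next
  case False
  then obtain j where "1 \<le> i" and j: "topbit i = ks j" by auto
  then have "2^ks j \<le> i"
    using topbit_bounds(1)[of i] by simp
  then have "(2::nat)^ks j < 2^ks (Suc J)"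
    using assms by linarith
  then have "j \<le> J" by simp
  then have "(2::nat)^(ks j + 1) \<le> 2^(ks J + 1)"
    using strict_mono_ks by (simp add: strict_mono_less_eq)
  moreover have "i < 2^(ks j + 1)"
    using topbit_bounds(2)[OF \<open>1 \<le> i\<close>] j by simp
  ultimately have "i < 2^(ks J + 1)" by linarith
  then show ?thesis
    using kacz_coeff_F_block[OF \<open>1 \<le> i\<close> j] \<beta>_mono[OF \<open>j \<le> J\<close>] by (simp add: abs_of_pos)
qed

lemma sum_abs_kacz_coeff_F_le: "2^(ks J + 1) * (\<Sum>i<2^ks J. \<bar>kacz_coeff F i\<bar>) \<le> \<beta> J / 2"
proof (cases J)
  case 0
  have "kacz_coeff F i = 0" if "i < 2^ks 0" for i
  proof (rule kacz_coeff_F_eq_0)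
    have not_block: "topbit i \<noteq> ks j" if "1 \<le> i" for j
    proof -
      have "2^topbit i < (2::nat)^ks 0"
        using topbit_bounds(1)[OF that] \<open>i < 2^ks 0\<close> by linarith
      moreover have "ks 0 \<le> ks j"
        using strict_mono_ks by (simp add: strict_mono_less_eq)
      ultimately show ?thesis by simp
    qed
    show "i = 0 \<or> topbit i \<notin> range ks"
    proof (cases "i = 0")
      case False
      then show ?thesis using not_block[of _] by (simp add: Suc_le_eq) blast
    qed simp
  qed
  then show ?thesis using 0 by (simp add: less_imp_le)
next
  case (Suc J')
  have "(2::nat)^(ks J' + 1) \<le> 2^ks J"
    using Suc by (intro power_increasing) (auto simp: Suc_le_eq)
  then have "(\<Sum>i<2^ks J. \<bar>kacz_coeff F i\<bar>) \<le> (\<Sum>i<2^ks J. if i < (2::nat)^(ks J' + 1) then \<beta> J' else 0)"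
    using Suc by (intro sum_mono abs_kacz_coeff_F_le) simp
  also have "\<dots> = (\<Sum>i<(2::nat)^(ks J' + 1). \<beta> J')"
    using \<open>(2::nat)^(ks J' + 1) \<le> 2^ks J\<close> by (intro sum.mono_neutral_cong_right) auto
  finally have "2^(ks J + 1) * (\<Sum>i<2^ks J. \<bar>kacz_coeff F i\<bar>) \<le> 2^(ks J + 1) * (2^(ks J' + 1) * \<beta> J')"
    by (intro mult_left_mono) (simp_all add: mult_ac)
  also have "\<dots> \<le> \<beta> J / 2"
    using ks_growth[of J'] Suc by simp
  finally show ?thesis .
qed

lemma kacz_fejer_F_block:
  assumes "M < 2^ks J"
  shows "real (2^ks J + M) * kacz_fejer F (2^ks J + M) x
    = (\<Sum>k<2^ks J. real (2^ks J + M - k) * (kacz_coeff F k * kacz k x))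
      + \<beta> J * (\<Sum>r<M. real (M - r) * kacz (2^ks J + r) x)"
proof -
  have split: "(\<Sum>k<a + b. f k) = (\<Sum>k<a. f k) + (\<Sum>r<b. f (a + r))" for a b and f :: "nat \<Rightarrow> real"
    by (induction b) (auto simp: add.assoc)
  have block: "kacz_coeff F (2^ks J + r) = \<beta> J" if "r < M" for r
    using that assms by (intro kacz_coeff_F_block) (auto simp: topbit_power_add)
  have "0 < 2^ks J + real M" by (intro add_pos_nonneg) simp_all
  then have "real (2^ks J + M) * kacz_fejer F (2^ks J + M) x
      = (\<Sum>k<2^ks J + M. real (2^ks J + M - k) * (kacz_coeff F k * kacz k x))"
    by (simp add: kacz_fejer_eq_weighted_sum)
  also have "\<dots> = (\<Sum>k<2^ks J. real (2^ks J + M - k) * (kacz_coeff F k * kacz k x))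
      + (\<Sum>r<M. real (2^ks J + M - (2^ks J + r)) * (kacz_coeff F (2^ks J + r) * kacz (2^ks J + r) x))"
    by (rule split)
  also have "(\<Sum>r<M. real (2^ks J + M - (2^ks J + r)) * (kacz_coeff F (2^ks J + r) * kacz (2^ks J + r) x))
      = \<beta> J * (\<Sum>r<M. real (M - r) * kacz (2^ks J + r) x)"
    unfolding sum_distrib_left by (intro sum.cong) (auto simp: block)
  finally show ?thesis .
qed

lemma abs_kacz_fejer_F_ge:
  assumes "M < 2^ks J" "M mod 4 = 1"
  shows "\<beta> J / 2^(ks J + 2) \<le> \<bar>kacz_fejer F (2^ks J + M) x\<bar>"
proof -
  define m where "m = 2^ks J + M"
  define A where "A = (\<Sum>k<2^ks J. real (m - k) * (kacz_coeff F k * kacz k x))"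
  define T where "T = (\<Sum>r<M. real (M - r) * kacz (2^ks J + r) x)"
  have m_less: "real m < 2^(ks J + 1)"
    using assms(1) by (simp add: m_def flip: of_nat_less_iff)
  have "\<bar>A\<bar> \<le> (\<Sum>k<2^ks J. real m * \<bar>kacz_coeff F k\<bar>)"
    unfolding A_def by (rule order_trans[OF sum_abs sum_mono]) (auto simp: abs_mult intro!: mult_right_mono)
  also have "\<dots> \<le> 2^(ks J + 1) * (\<Sum>k<2^ks J. \<bar>kacz_coeff F k\<bar>)"
    using m_less by (simp add: sum_distrib_left[symmetric] mult_right_mono sum_nonneg)
  also have "\<dots> \<le> \<beta> J / 2" by (rule sum_abs_kacz_coeff_F_le)
  finally have "\<bar>A\<bar> \<le> \<beta> J / 2" .
  moreover have "1 \<le> \<bar>T\<bar>"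
    unfolding T_def using assms(2) kacz_eq_1_or_minus_1 by (rule one_le_abs_weighted_sign_sum)
  then have "\<beta> J * 1 \<le> \<beta> J * \<bar>T\<bar>"
    by (intro mult_left_mono) (simp_all add: less_imp_le)
  then have "\<beta> J \<le> \<bar>\<beta> J * T\<bar>"
    by (simp add: abs_mult abs_of_pos)
  ultimately have "\<beta> J / 2 \<le> \<bar>A + \<beta> J * T\<bar>" by linarith
  also have "A + \<beta> J * T = real m * kacz_fejer F m x"
    using kacz_fejer_F_block[OF assms(1)] by (simp add: A_def T_def m_def)
  finally have "\<beta> J / 2 \<le> real m * \<bar>kacz_fejer F m x\<bar>" by (simp add: abs_mult)
  then have "\<beta> J / 2 \<le> 2^(ks J + 1) * \<bar>kacz_fejer F m x\<bar>"
    using m_less by (smt (verit) abs_ge_zero mult_right_mono)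
  then show ?thesis by (simp add: m_def field_simps)
qed

lemma weak_Lp_pow_kacz_fejer_F_ge:
  assumes "M < 2^ks J" "M mod 4 = 1"
  shows "ennreal (2 powr (real (ks J) * (1 - 2*p) - real J - 3*p))
    \<le> weak_Lp_pow p (kacz_fejer F (2^ks J + M))"
proof -
  define t where "t = \<beta> J / 2^(ks J + 3)"
  have "t = 2 powr (real (ks J) * (1/p - 1) - real J / p - (real (ks J) + 3))"
    by (simp add: t_def atom_weight_def powr_diff powr_realpow[symmetric])
  moreover have "(real (ks J) * (1/p - 1) - real J / p - (real (ks J) + 3)) * p
      = real (ks J) * (1 - 2*p) - real J - 3*p"
    using p_pos by (simp add: field_simps)
  ultimately have "t powr p = 2 powr (real (ks J) * (1 - 2*p) - real J - 3*p)"
    by (simp add: powr_powr)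
  moreover have "ennreal (t powr p) \<le> weak_Lp_pow p (kacz_fejer F (2^ks J + M))"
  proof (rule weak_Lp_pow_ge)
    show "0 < t" by (simp add: t_def)
    have "t < \<beta> J / 2^(ks J + 2)" by (simp add: t_def field_simps power_add)
    then show "t < \<bar>kacz_fejer F (2^ks J + M) x\<bar>" for x
      using abs_kacz_fejer_F_ge[OF assms] by (rule less_le_trans)
  qed
  ultimately show ?thesis by simp
qed

lemma weak_Lp_pow_kacz_fejer_F_div_ge:
  fixes \<Phi> :: "nat \<Rightarrow> real"
  assumes \<Phi>_ge_1: "\<And>n. 1 \<le> n \<Longrightarrow> 1 \<le> \<Phi> n"
    and \<Phi>_mono: "\<And>m n. 1 \<le> m \<Longrightarrow> m \<le> n \<Longrightarrow> \<Phi> m \<le> \<Phi> n"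
    and "q < 2^(ks J - 2)"
  shows "ennreal (2 powr (real (ks J) * (1 - 2*p) - real J - 3*p) / \<Phi> (2^(ks J + 1)))
    \<le> weak_Lp_pow p (kacz_fejer F (Suc (2^ks J + 4 * q))) / ennreal (\<Phi> (Suc (2^ks J + 4 * q)))"
proof -
  define w where "w = 2 powr (real (ks J) * (1 - 2*p) - real J - 3*p)"
  define m where "m = 2^ks J + (4 * q + 1)"
  have "2^ks J = (2::nat)^(ks J - 2) * 2^2"
    by (metis ks_ge_2 le_add_diff_inverse2 power_add)
  then have M: "4 * q + 1 < 2^ks J" "(4 * q + 1) mod 4 = 1"
    using assms(3) by simp_all
  then have "m \<le> 2^(ks J + 1)" by (simp add: m_def)
  then have "\<Phi> m \<le> \<Phi> (2^(ks J + 1))" "1 \<le> \<Phi> m"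
    using \<Phi>_mono[of m] \<Phi>_ge_1[of m] by (simp_all add: m_def)
  then have "ennreal (w / \<Phi> (2^(ks J + 1))) \<le> ennreal (w / \<Phi> m)"
    by (intro ennreal_leI divide_left_mono) (auto simp: w_def)
  also have "\<dots> = ennreal w / ennreal (\<Phi> m)"
    using \<open>1 \<le> \<Phi> m\<close> by (simp add: w_def divide_ennreal)
  also have "\<dots> \<le> weak_Lp_pow p (kacz_fejer F m) / ennreal (\<Phi> m)"
    using weak_Lp_pow_kacz_fejer_F_ge[OF M] by (simp add: w_def m_def divide_right_mono_ennreal)
  finally show ?thesis by (simp add: w_def m_def)
qed

lemma suminf_weak_Lp_pow_ge:
  fixes \<Phi> :: "nat \<Rightarrow> real"
  assumes "\<And>n. 1 \<le> n \<Longrightarrow> 1 \<le> \<Phi> n"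
    and "\<And>m n. 1 \<le> m \<Longrightarrow> m \<le> n \<Longrightarrow> \<Phi> m \<le> \<Phi> n"
  shows "ennreal (2 powr (real (ks J + 1) * (2 - 2*p)) / 2 powr (real J + 5) / \<Phi> (2^(ks J + 1)))
    \<le> (\<Sum>m. weak_Lp_pow p (kacz_fejer F (Suc m)) / ennreal (\<Phi> (Suc m)))"
proof -
  define f where "f = (\<lambda>m. weak_Lp_pow p (kacz_fejer F (Suc m)) / ennreal (\<Phi> (Suc m)))"
  define w where "w = 2 powr (real (ks J) * (1 - 2*p) - real J - 3*p) / \<Phi> (2^(ks J + 1))"
  define N :: nat where "N = 2^(ks J - 2)"
  have "0 \<le> w" using assms(1)[of "2^(ks J + 1)"] by (simp add: w_def)
  have "2 powr (real (ks J + 1) * (2 - 2*p)) / 2 powr (real J + 5)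
      \<le> real N * 2 powr (real (ks J) * (1 - 2*p) - real J - 3*p)"
  proof -
    have "real N = 2 powr (real (ks J) - 2)"
      using ks_ge_2[of J] by (simp add: N_def powr_realpow[symmetric] of_nat_diff)
    then have "real N * 2 powr (real (ks J) * (1 - 2*p) - real J - 3*p)
        = 2 powr (real (ks J + 1) * (2 - 2*p) - (real J + 4 + p))"
      by (simp add: powr_add[symmetric] algebra_simps)
    moreover have "2 powr (real (ks J + 1) * (2 - 2*p) - (real J + 5))
        \<le> 2 powr (real (ks J + 1) * (2 - 2*p) - (real J + 4 + p))"
      using p_le_1 by (intro powr_mono) auto
    ultimately show ?thesis by (simp add: powr_diff)
  qed
  then have "2 powr (real (ks J + 1) * (2 - 2*p)) / 2 powr (real J + 5) / \<Phi> (2^(ks J + 1))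
      \<le> real N * 2 powr (real (ks J) * (1 - 2*p) - real J - 3*p) / \<Phi> (2^(ks J + 1))"
    using assms(1)[of "2^(ks J + 1)"] by (intro divide_right_mono) auto
  then have "ennreal (2 powr (real (ks J + 1) * (2 - 2*p)) / 2 powr (real J + 5) / \<Phi> (2^(ks J + 1)))
      \<le> ennreal (real N * w)"
    unfolding w_def by (intro ennreal_leI) (simp only: times_divide_eq_right)
  also have "\<dots> = (\<Sum>q<N. ennreal w)"
    using \<open>0 \<le> w\<close> by (subst sum_ennreal) auto
  also have "\<dots> \<le> (\<Sum>q<N. f (2^ks J + 4 * q))"
    unfolding f_def w_def N_def using assms
    by (intro sum_mono weak_Lp_pow_kacz_fejer_F_div_ge) auto
  also have "\<dots> = sum f ((\<lambda>q. 2^ks J + 4 * q) ` {..<N})"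
    by (simp add: sum.reindex inj_on_def)
  also have "\<dots> \<le> suminf f"
    by (rule sum_le_suminf) (auto intro: summableI)
  finally show ?thesis by (simp only: f_def)
qed

lemma suminf_weak_Lp_pow_eq_top:
  fixes \<Phi> :: "nat \<Rightarrow> real"
  assumes "\<And>n. 1 \<le> n \<Longrightarrow> 1 \<le> \<Phi> n"
    and "\<And>m n. 1 \<le> m \<Longrightarrow> m \<le> n \<Longrightarrow> \<Phi> m \<le> \<Phi> n"
    and large: "\<And>J. 2 powr (2 * real J + 5) \<le> 2 powr (real (ks J + 1) * (2 - 2*p)) / \<Phi> (2^(ks J + 1))"
  shows "(\<Sum>m. weak_Lp_pow p (kacz_fejer F (Suc m)) / ennreal (\<Phi> (Suc m))) = \<infinity>"
proof (rule ennreal_eq_top_if_nat_le)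
  fix J
  have "real J \<le> 2 powr real J"
    using less_exp[of J] by (simp add: powr_realpow less_imp_le)
  also have "\<dots> = 2 powr (2 * real J + 5) / 2 powr (real J + 5)"
    by (simp flip: powr_diff)
  also have "\<dots> \<le> 2 powr (real (ks J + 1) * (2 - 2*p)) / \<Phi> (2^(ks J + 1)) / 2 powr (real J + 5)"
    using large[of J] by (rule divide_right_mono) simp
  finally have "ennreal (real J)
      \<le> ennreal (2 powr (real (ks J + 1) * (2 - 2*p)) / 2 powr (real J + 5) / \<Phi> (2^(ks J + 1)))"
    by (intro ennreal_leI) (simp add: divide_divide_eq_left mult.commute)
  also have "\<dots> \<le> (\<Sum>m. weak_Lp_pow p (kacz_fejer F (Suc m)) / ennreal (\<Phi> (Suc m)))"
    using assms(1,2) by (rule suminf_weak_Lp_pow_ge)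
  finally show "ennreal (real J) \<le> (\<Sum>m. weak_Lp_pow p (kacz_fejer F (Suc m)) / ennreal (\<Phi> (Suc m)))" .
qed

end

lemma exists_fast_increasing_sequence:
  fixes p :: real and R :: "nat \<Rightarrow> ereal"
  assumes "0 < p" "p < 1/2" "limsup R = \<infinity>"
  shows "\<exists>ks. strict_mono ks \<and> (\<forall>J. 2 \<le> ks J) \<and>
    (\<forall>J. 2^(ks (Suc J) + 1) * (2^(ks J + 1) * atom_weight p J (ks J))
       \<le> atom_weight p (Suc J) (ks (Suc J)) / 2) \<and>
    (\<forall>J. ereal (2 powr (2 * real J + 5)) \<le> R (ks J + 1))"
proof -
  define P where "P J k \<longleftrightarrow> 2 \<le> k \<and> ereal (2 powr (2 * real J + 5)) \<le> R (Suc k)" for J k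
  define Q where "Q J k k' \<longleftrightarrow> k < k' \<and>
    2^(k' + 1) * (2^(k + 1) * atom_weight p J k) \<le> atom_weight p (Suc J) k' / 2" for J k k'
  have frequently_P: "\<exists>\<^sub>F k in sequentially. Ev k \<and> P J k" if "\<forall>\<^sub>F k in sequentially. Ev k" for Ev J
  proof -
    have "\<exists>\<^sub>F k in sequentially. ereal (2 powr (2 * real J + 5)) < R (Suc k)"
      using assms(3) by (rule frequently_less_of_limsup_eq_infinity)
    moreover have "\<forall>\<^sub>F k in sequentially. Ev k \<and> 2 \<le> k"
      using that eventually_ge_at_top by (rule eventually_conj)
    ultimately show ?thesis
      by (rule frequently_rev_mp[OF _ eventually_mono]) (auto simp: P_def)
  qed
  have "\<exists>ks. \<forall>J. P J (ks J) \<and> Q J (ks J) (ks (Suc J))"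
  proof (rule dependent_nat_choice)
    show "\<exists>k. P 0 k"
      using frequently_P[of "\<lambda>_. True"] by (auto dest: frequently_ex)
  next
    fix k J assume "P J k"
    have "\<forall>\<^sub>F k' in sequentially. Q J k k'"
      unfolding Q_def using eventually_gt_at_top eventually_atom_weight_dominates[OF assms(1,2)]
      by (rule eventually_conj)
    then have "\<exists>\<^sub>F k' in sequentially. Q J k k' \<and> P (Suc J) k'"
      by (rule frequently_P)
    then show "\<exists>k'. P (Suc J) k' \<and> Q J k k'"
      by (auto dest: frequently_ex)
  qed
  then show ?thesis
    unfolding P_def Q_def by (auto intro: strict_monoI_Suc)
qed

theorem theorem2:
  fixes p :: real and \<Phi> :: "nat \<Rightarrow> real"
  assumes "0 < p" "p < 1/2"
    and "\<And>n. n \<ge> 1 \<Longrightarrow> \<Phi> n \<ge> 1"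
    and "\<And>m n. 1 \<le> m \<Longrightarrow> m \<le> n \<Longrightarrow> \<Phi> m \<le> \<Phi> n"
    and "filterlim \<Phi> at_top sequentially"
    and "limsup (\<lambda>k. ereal (2 powr (real k * (2 - 2 * p)) / \<Phi> (2 ^ k))) = \<infinity>"
  shows "\<exists>F. in_Hp p F \<and>
           (\<Sum>m. weak_Lp_pow p (kacz_fejer F (Suc m)) / ennreal (\<Phi> (Suc m))) = \<infinity>"
proof -
  obtain ks where "strict_mono ks" "\<And>J. 2 \<le> ks J"
    and growth: "\<And>J. 2^(ks (Suc J) + 1) * (2^(ks J + 1) * atom_weight p J (ks J))
        \<le> atom_weight p (Suc J) (ks (Suc J)) / 2"
    and large: "\<And>J. 2 powr (2 * real J + 5)
        \<le> 2 powr (real (ks J + 1) * (2 - 2 * p)) / \<Phi> (2 ^ (ks J + 1))"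
    using exists_fast_increasing_sequence[OF assms(1,2,6)] by auto
  interpret kaczmarz_counterexample p ks
    using assms(1,2) \<open>strict_mono ks\<close> \<open>\<And>J. 2 \<le> ks J\<close> growth by unfold_locales auto
  have "(\<Sum>m. weak_Lp_pow p (kacz_fejer F (Suc m)) / ennreal (\<Phi> (Suc m))) = \<infinity>"
    using assms(3,4) large by (rule suminf_weak_Lp_pow_eq_top)
  with in_Hp_F show ?thesis by blast
qed

end
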